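(* (Local triangle inequality.) Fix an integer $N\ge1$. Let $\Gamma=(V,E)$ be a finite graph and $\phi:V\to\mathbb{C}$ a solution of equation (1) with $\gamma:V\to\mathbb{R}$. Let $x,y,z\in V$ be pairwise adjacent with $\gamma(x),\gamma(y),\gamma(z)<1$. Then $\ell(\overline{xy})+\ell(\overline{xz})\ge\ell(\overline{yz})$, and the inequality is strict if $\phi$ is not constant on $\{x\}\cup\{w:w\sim x\}$.
   Context: Equation (1) at $x$ of degree $n(x)$: $\frac{\gamma(x)}{n(x)}\big(\sum_{w\sim x}(\phi(w)-\phi(x))\big)^2=\sum_{w\sim x}(\phi(x)-\phi(w))^2$. For $x\in V$ put $\rho(x)=\frac12\Big\{\sum_{w\sim x}|\phi(w)-\phi(x)|^2-\frac{\gamma(x)}{n(x)}\Big|\sum_{w\sim x}(\phi(w)-\phi(x))\Big|^2\Big\}$. If $\gamma(x)<1$, the median edge length at $x$ (relative to $\phi$, in dimension $N$) is $r(x)\ge0$ with $r(x)^2=\frac{N+(1-N)\gamma(x)}{n(x)(1-\gamma(x))}\rho(x)$. For an edge $\overline{xy}$ with $\gamma(x),\gamma(y)<1$, its length is $\ell(\overline{xy})=\frac{r(x)+r(y)}{2}$. *)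

theory Defs
  imports Complex_Main
begin

definition simple_graph :: "'a set \<Rightarrow> ('a \<Rightarrow> 'a \<Rightarrow> bool) \<Rightarrow> bool" where
  "simple_graph V E \<longleftrightarrow> finite V \<and> (\<forall>x y. E x y \<longrightarrow> E y x) \<and> (\<forall>x. \<not> E x x)
     \<and> (\<forall>x y. E x y \<longrightarrow> x \<in> V \<and> y \<in> V)"

definition nbrs :: "'a set \<Rightarrow> ('a \<Rightarrow> 'a \<Rightarrow> bool) \<Rightarrow> 'a \<Rightarrow> 'a set" where
  "nbrs V E x = {w \<in> V. E x w}"

definition deg :: "'a set \<Rightarrow> ('a \<Rightarrow> 'a \<Rightarrow> bool) \<Rightarrow> 'a \<Rightarrow> nat" where
  "deg V E x = card (nbrs V E x)"

definition eq1_at :: "'a set \<Rightarrow> ('a \<Rightarrow> 'a \<Rightarrow> bool) \<Rightarrow> ('a \<Rightarrow> real) \<Rightarrow> ('a \<Rightarrow> complex) \<Rightarrow> 'a \<Rightarrow> bool" where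
  "eq1_at V E \<gamma> \<phi> x \<longleftrightarrow>
     complex_of_real (\<gamma> x / real (deg V E x)) * (\<Sum>w\<in>nbrs V E x. \<phi> w - \<phi> x)^2
       = (\<Sum>w\<in>nbrs V E x. (\<phi> x - \<phi> w)^2)"

definition rho :: "'a set \<Rightarrow> ('a \<Rightarrow> 'a \<Rightarrow> bool) \<Rightarrow> ('a \<Rightarrow> real) \<Rightarrow> ('a \<Rightarrow> complex) \<Rightarrow> 'a \<Rightarrow> real" where
  "rho V E \<gamma> \<phi> x = (1/2) * ((\<Sum>w\<in>nbrs V E x. (cmod (\<phi> w - \<phi> x))^2)
      - \<gamma> x / real (deg V E x) * (cmod (\<Sum>w\<in>nbrs V E x. \<phi> w - \<phi> x))^2)"

definition med_len :: "nat \<Rightarrow> 'a set \<Rightarrow> ('a \<Rightarrow> 'a \<Rightarrow> bool) \<Rightarrow> ('a \<Rightarrow> real) \<Rightarrow> ('a \<Rightarrow> complex) \<Rightarrow> 'a \<Rightarrow> real" where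
  "med_len N V E \<gamma> \<phi> x = sqrt ((real N + (1 - real N) * \<gamma> x)
      / (real (deg V E x) * (1 - \<gamma> x)) * rho V E \<gamma> \<phi> x)"

definition edge_len :: "nat \<Rightarrow> 'a set \<Rightarrow> ('a \<Rightarrow> 'a \<Rightarrow> bool) \<Rightarrow> ('a \<Rightarrow> real) \<Rightarrow> ('a \<Rightarrow> complex) \<Rightarrow> 'a \<Rightarrow> 'a \<Rightarrow> real" where
  "edge_len N V E \<gamma> \<phi> x y = (med_len N V E \<gamma> \<phi> x + med_len N V E \<gamma> \<phi> y) / 2"

end

theory Submission
  imports Defs "HOL-Analysis.Convex"
begin

(* Since an edge length is the mean of the median lengths at its two endpoints, for a
   triangle x, y, z one has the identity  l(xy) + l(xz) = r(x) + l(yz).  Hence the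
   inequality l(xy) + l(xz) >= l(yz) is equivalent to r(x) >= 0, and strictness to
   r(x) > 0.  Both follow from the sign of rho(x): by Cauchy-Schwarz,
   |sum of the differences|^2 <= n(x) * (sum of their squared moduli), and since gamma(x) < 1
   the damped term gamma(x)/n(x) |...|^2 stays (strictly, unless all differences vanish)
   below the sum of squares. *)

lemma edge_len_triangle_identity:
  "edge_len N V E \<gamma> \<phi> x y + edge_len N V E \<gamma> \<phi> x z
     = med_len N V E \<gamma> \<phi> x + edge_len N V E \<gamma> \<phi> y z"
  unfolding edge_len_def by (simp add: field_simps)

lemma norm_sum_squared_le:
  fixes a :: "'b \<Rightarrow> 'v::real_normed_vector"
  shows "(norm (\<Sum>w\<in>A. a w))\<^sup>2 \<le> real (card A) * (\<Sum>w\<in>A. (norm (a w))\<^sup>2)"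
proof -
  have "(norm (\<Sum>w\<in>A. a w))\<^sup>2 \<le> (\<Sum>w\<in>A. norm (a w))\<^sup>2"
    by (simp add: norm_sum power_mono)
  also have "\<dots> \<le> real (card A) * (\<Sum>w\<in>A. (norm (a w))\<^sup>2)"
    using sum_squared_le_sum_of_squares[of "\<lambda>w. norm (a w)" A] by (simp add: mult.commute)
  finally show ?thesis .
qed

lemma damped_norm_sum_squared_le:
  fixes a :: "'b \<Rightarrow> 'v::real_normed_vector" and g :: real
  assumes "finite A" "A \<noteq> {}" "g < 1"
  defines "S \<equiv> \<Sum>w\<in>A. (norm (a w))\<^sup>2"
  shows "g / real (card A) * (norm (\<Sum>w\<in>A. a w))\<^sup>2 \<le> S"
    and "(\<exists>w\<in>A. a w \<noteq> 0) \<Longrightarrow> g / real (card A) * (norm (\<Sum>w\<in>A. a w))\<^sup>2 < S"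
proof -
  define n where "n = real (card A)"
  define T where "T = (norm (\<Sum>w\<in>A. a w))\<^sup>2"
  have n_pos: "n > 0" using assms(1,2) unfolding n_def by (simp add: card_gt_0_iff)
  have S_nonneg: "S \<ge> 0" unfolding S_def by (simp add: sum_nonneg)
  have T_le: "T \<le> n * S" unfolding T_def n_def S_def by (rule norm_sum_squared_le)
  have damped: "g / n * T \<le> max g 0 * S"
  proof (cases "g \<le> 0")
    case True
    then have "g / n * T \<le> 0" using n_pos
      by (simp add: T_def divide_nonpos_pos mult_nonpos_nonneg)
    then show ?thesis using True by simp
  next
    case False
    then have "g / n * T \<le> g / n * (n * S)" using n_pos T_le by (intro mult_left_mono) auto
    then show ?thesis using False n_pos by simp
  qed
  have "max g 0 * S \<le> S" using S_nonneg assms(3) by (simp add: mult_left_le_one_le)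
  with damped show "g / real (card A) * (norm (\<Sum>w\<in>A. a w))\<^sup>2 \<le> S"
    unfolding n_def T_def by linarith
  assume "\<exists>w\<in>A. a w \<noteq> 0"
  then obtain w where "w \<in> A" "a w \<noteq> 0" by blast
  then have "S > 0" unfolding S_def using assms(1) by (intro sum_pos2[of A w]) auto
  then have "max g 0 * S < S" using assms(3) by simp
  with damped show "g / real (card A) * (norm (\<Sum>w\<in>A. a w))\<^sup>2 < S"
    unfolding n_def T_def by linarith
qed

lemma nbrs_finite_nonempty:
  assumes "simple_graph V E" "E x y"
  shows "finite (nbrs V E x)" "nbrs V E x \<noteq> {}"
proof -
  have "finite V" "y \<in> V" using assms unfolding simple_graph_def by auto
  then show "finite (nbrs V E x)" "nbrs V E x \<noteq> {}"
    using assms(2) unfolding nbrs_def by auto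
qed

lemma deg_pos:
  assumes "simple_graph V E" "E x y"
  shows "deg V E x > 0"
  using nbrs_finite_nonempty[of V E x y, OF assms] unfolding deg_def by (simp add: card_gt_0_iff)

lemma rho_nonneg:
  assumes "simple_graph V E" "E x y" "\<gamma> x < 1"
  shows "rho V E \<gamma> \<phi> x \<ge> 0"
  using damped_norm_sum_squared_le(1)[OF nbrs_finite_nonempty[of V E x y, OF assms(1,2)] assms(3),
      of "\<lambda>w. \<phi> w - \<phi> x"]
  unfolding rho_def deg_def by simp

lemma rho_pos:
  assumes "simple_graph V E" "E x y" "\<gamma> x < 1"
    and "\<not> (\<forall>w \<in> insert x (nbrs V E x). \<phi> w = \<phi> x)"
  shows "rho V E \<gamma> \<phi> x > 0"
proof -
  have "\<exists>w\<in>nbrs V E x. \<phi> w - \<phi> x \<noteq> 0" using assms(4) by auto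
  from damped_norm_sum_squared_le(2)[OF nbrs_finite_nonempty[of V E x y, OF assms(1,2)] assms(3) this]
  show ?thesis unfolding rho_def deg_def by simp
qed

text \<open>The dimension-dependent prefactor of the median length is positive,
  since \<open>N + (1 - N) g = 1 + (N - 1)(1 - g)\<close>.\<close>
lemma median_prefactor_pos:
  assumes "N \<ge> 1" "g < 1" "n > 0"
  shows "(real N + (1 - real N) * g) / (real n * (1 - g)) > 0"
proof -
  have "real N + (1 - real N) * g = 1 + (real N - 1) * (1 - g)" by algebra
  moreover have "(real N - 1) * (1 - g) \<ge> 0" using assms(1,2) by simp
  ultimately show ?thesis using assms(2,3) by simp
qed

lemma med_len_nonneg:
  assumes "N \<ge> 1" "simple_graph V E" "E x y" "\<gamma> x < 1"
  shows "med_len N V E \<gamma> \<phi> x \<ge> 0"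
proof -
  have "(real N + (1 - real N) * \<gamma> x) / (real (deg V E x) * (1 - \<gamma> x)) > 0"
    using assms(1,4) deg_pos[of V E x y, OF assms(2,3)] by (rule median_prefactor_pos)
  moreover have "rho V E \<gamma> \<phi> x \<ge> 0" using assms(2-4) by (rule rho_nonneg)
  ultimately show ?thesis unfolding med_len_def by (intro real_sqrt_ge_zero mult_nonneg_nonneg) auto
qed

lemma med_len_pos:
  assumes "N \<ge> 1" "simple_graph V E" "E x y" "\<gamma> x < 1"
    and "\<not> (\<forall>w \<in> insert x (nbrs V E x). \<phi> w = \<phi> x)"
  shows "med_len N V E \<gamma> \<phi> x > 0"
proof -
  have "(real N + (1 - real N) * \<gamma> x) / (real (deg V E x) * (1 - \<gamma> x)) > 0"
    using assms(1,4) deg_pos[of V E x y, OF assms(2,3)] by (rule median_prefactor_pos)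
  moreover have "rho V E \<gamma> \<phi> x > 0" using assms(2-5) by (rule rho_pos)
  ultimately show ?thesis unfolding med_len_def by (intro real_sqrt_gt_zero mult_pos_pos)
qed

theorem proposition6p4:
  fixes N :: nat and V :: "'a set" and E :: "'a \<Rightarrow> 'a \<Rightarrow> bool"
    and \<phi> :: "'a \<Rightarrow> complex" and \<gamma> :: "'a \<Rightarrow> real" and x y z :: 'a
  assumes "N \<ge> 1"
    and "simple_graph V E"
    and "\<forall>v\<in>V. eq1_at V E \<gamma> \<phi> v"
    and "x \<in> V" "y \<in> V" "z \<in> V"
    and "E x y" "E x z" "E y z"
    and "\<gamma> x < 1" "\<gamma> y < 1" "\<gamma> z < 1"
  shows "edge_len N V E \<gamma> \<phi> x y + edge_len N V E \<gamma> \<phi> x z \<ge> edge_len N V E \<gamma> \<phi> y z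
       \<and> ((\<not> (\<forall>w \<in> insert x (nbrs V E x). \<phi> w = \<phi> x)) \<longrightarrow>
         edge_len N V E \<gamma> \<phi> x y + edge_len N V E \<gamma> \<phi> x z > edge_len N V E \<gamma> \<phi> y z)"
  using edge_len_triangle_identity[of N V E \<gamma> \<phi> x y z]
    med_len_nonneg[of N V E x y \<gamma> \<phi>] med_len_pos[of N V E x y \<gamma> \<phi>] assms(1,2,7,10)
  by auto

end
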